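(* Let $U\subseteq\mathbb{R}^n$ be an open set with finite Lebesgue measure and let $f:U\times\mathbb{R}^m\to\mathbb{R}$ be a normal integrand bounded from below. Let $(u_k)$ be a sequence uniformly bounded in $L^\infty(U;\mathbb{R}^m)$ generating a Young measure $\nu=\{\nu_x\}_{x\in U}$. Then $$\liminf_{k\to\infty}\operatorname*{ess\,sup}_{x\in U}f(x,u_k(x))\ge\operatorname*{ess\,sup}_{x\in U}\bar f(x),\qquad\bar f(x):=\nu_x\text{-}\operatorname*{ess\,sup}_{\xi\in\mathbb{R}^m}f(x,\xi).$$
   Context: A normal integrand is a $\mathcal{L}^n\otimes\mathcal{B}$-measurable $f:U\times\mathbb{R}^m\to\mathbb{R}$ with $f(x,\cdot)$ lower semicontinuous for a.e. $x$. A family $\{\nu_x\}_{x\in U}$ of Borel probability measures on $\mathbb{R}^m$ is the Young measure generated by a bounded sequence $(u_k)$ in $L^\infty$ if it is weakly* measurable, the $\nu_x$ are supported in a common compact set, and for every Carathéodory $g$ with $(g(\cdot,u_k))$ bounded and equi-integrable in $L^1$, $g(\cdot,u_k)\rightharpoonup\int g(\cdot,\xi)\,d\nu_{(\cdot)}(\xi)$ weakly in $L^1$. $\nu_x\text{-}\operatorname{ess\,sup}$ denotes the essential supremum with respect to $\nu_x$. *)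

theory Defs
  imports "HOL-Analysis.Analysis" "HOL-Probability.Probability_Measure"
begin

definition ess_sup :: "'a measure \<Rightarrow> ('a \<Rightarrow> ereal) \<Rightarrow> ereal" where
  "ess_sup M g = Inf {z. AE x in M. g x \<le> z}"

definition lsc :: "('b::topological_space \<Rightarrow> real) \<Rightarrow> bool" where
  "lsc g \<longleftrightarrow> (\<forall>\<xi> c. c < g \<xi> \<longrightarrow> eventually (\<lambda>\<eta>. c < g \<eta>) (at \<xi>))"

definition normal_integrand ::
  "'a::euclidean_space set \<Rightarrow> ('a \<Rightarrow> 'b::euclidean_space \<Rightarrow> real) \<Rightarrow> bool" where
  "normal_integrand U f \<longleftrightarrow>
     (\<lambda>(x,\<xi>). f x \<xi>) \<in> borel_measurable (lebesgue_on U \<Otimes>\<^sub>M (borel :: 'b measure)) \<and>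
     (AE x in lebesgue_on U. lsc (f x))"

definition caratheodory ::
  "'a::euclidean_space set \<Rightarrow> ('a \<Rightarrow> 'b::euclidean_space \<Rightarrow> real) \<Rightarrow> bool" where
  "caratheodory U g \<longleftrightarrow>
     (\<forall>\<xi>. (\<lambda>x. g x \<xi>) \<in> borel_measurable (lebesgue_on U)) \<and>
     (AE x in lebesgue_on U. continuous_on UNIV (g x))"

definition bounded_equiintegrable ::
  "'a::euclidean_space set \<Rightarrow> (nat \<Rightarrow> 'a \<Rightarrow> real) \<Rightarrow> bool" where
  "bounded_equiintegrable U h \<longleftrightarrow>
     (\<forall>k. integrable (lebesgue_on U) (h k)) \<and>
     (\<exists>C. \<forall>k. (\<integral>x. \<bar>h k x\<bar> \<partial>lebesgue_on U) \<le> C) \<and>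
     (\<forall>\<epsilon>>0. \<exists>\<delta>>0. \<forall>A \<in> sets (lebesgue_on U). measure (lebesgue_on U) A < \<delta> \<longrightarrow>
        (\<forall>k. (\<integral>x\<in>A. \<bar>h k x\<bar> \<partial>lebesgue_on U) < \<epsilon>))"

definition weak_L1_conv ::
  "'a::euclidean_space set \<Rightarrow> (nat \<Rightarrow> 'a \<Rightarrow> real) \<Rightarrow> ('a \<Rightarrow> real) \<Rightarrow> bool" where
  "weak_L1_conv U h h0 \<longleftrightarrow>
     integrable (lebesgue_on U) h0 \<and>
     (\<forall>\<phi> \<in> borel_measurable (lebesgue_on U).
        (\<exists>B. AE x in lebesgue_on U. \<bar>\<phi> x\<bar> \<le> B) \<longrightarrow>
        (\<lambda>k. \<integral>x. h k x * \<phi> x \<partial>lebesgue_on U) \<longlonglongrightarrow> (\<integral>x. h0 x * \<phi> x \<partial>lebesgue_on U))"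

definition generates_young_measure ::
  "'a::euclidean_space set \<Rightarrow> (nat \<Rightarrow> 'a \<Rightarrow> 'b::euclidean_space) \<Rightarrow> ('a \<Rightarrow> 'b measure) \<Rightarrow> bool" where
  "generates_young_measure U u \<nu> \<longleftrightarrow>
     (\<forall>x\<in>U. prob_space (\<nu> x) \<and> sets (\<nu> x) = sets (borel :: 'b measure)) \<and>
     \<comment> \<open>weak* measurability: testing against C_0(R^m)\<close>
     (\<forall>\<phi> :: 'b \<Rightarrow> real. continuous_on UNIV \<phi> \<and> (\<phi> \<longlongrightarrow> 0) at_infinity \<longrightarrow>
        (\<lambda>x. \<integral>\<xi>. \<phi> \<xi> \<partial>\<nu> x) \<in> borel_measurable (lebesgue_on U)) \<and>
     \<comment> \<open>supported in a common compact set\<close>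
     (\<exists>K. compact K \<and> (\<forall>x\<in>U. measure (\<nu> x) (UNIV - K) = 0)) \<and>
     \<comment> \<open>representation of weak L^1 limits of Caratheodory compositions\<close>
     (\<forall>g. caratheodory U g \<and> bounded_equiintegrable U (\<lambda>k x. g x (u k x)) \<longrightarrow>
        weak_L1_conv U (\<lambda>k x. g x (u k x)) (\<lambda>x. \<integral>\<xi>. g x \<xi> \<partial>\<nu> x))"

end

theory Submission
  imports Defs
begin

text \<open>Argue by contradiction with a level \<open>t\<close> strictly between the two sides; then
  \<open>f(x, u\<^sub>k(x)) < t\<close> a.e. for infinitely many \<open>k\<close>. For a.e. \<open>x\<close>, lower semicontinuity makes
  \<open>{f(x,\<cdot>) > t}\<close> open, so it is covered by countably many balls \<open>B(c,r)\<close> such that it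
  contains the closed ball of radius \<open>2r\<close> around \<open>c\<close>. Along those \<open>k\<close> the values \<open>u\<^sub>k(x)\<close> avoid
  that closed ball, so testing the Young measure against a continuous bump equal to 1 on \<open>B(c,r)\<close>
  and vanishing off the closed ball gives \<open>\<nu>\<^sub>x(B(c,r)) = 0\<close>. Hence \<open>\<nu>\<^sub>x{f(x,\<cdot>) > t} = 0\<close>,
  i.e. the \<open>\<nu>\<^sub>x\<close>-essential supremum of \<open>f(x,\<cdot>)\<close> is at most \<open>t\<close> for a.e. \<open>x\<close>.\<close>

lemma frequently_sequentially_iff_infinite:
  "frequently (\<lambda>k. k \<in> K) sequentially \<longleftrightarrow> infinite K"
  by (simp add: cofinite_eq_sequentially[symmetric] frequently_cofinite)

lemma tendsto_eq_if_frequently_eq: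
  fixes X :: "'a \<Rightarrow> 'b::t1_space"
  assumes "(X \<longlongrightarrow> L) F" and "frequently (\<lambda>x. X x = c) F"
  shows "L = c"
proof (rule ccontr)
  assume "L \<noteq> c"
  with assms show False
    using tendsto_imp_eventually_ne by (auto simp: frequently_def)
qed

lemma frequently_less_if_Liminf_less:
  fixes X :: "'a \<Rightarrow> 'b::complete_linorder"
  assumes "Liminf F X < C"
  shows "frequently (\<lambda>x. X x < C) F"
proof -
  obtain y where "y < C" "\<not> eventually (\<lambda>x. y < X x) F"
    using assms le_Liminf_iff[of C F X] by (auto simp: not_le)
  then show ?thesis
    unfolding frequently_def by (metis (mono_tags, lifting) eventually_mono less_le_trans not_less)
qed

lemma AE_less_if_ess_sup_less:
  assumes "ess_sup M g < z"
  shows "AE x in M. g x < z"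
proof -
  obtain w where "AE x in M. g x \<le> w" "w < z"
    using assms unfolding ess_sup_def Inf_less_iff by blast
  then show ?thesis by (auto elim: eventually_mono)
qed

lemma ess_sup_le_if_AE_le:
  assumes "AE x in M. g x \<le> z"
  shows "ess_sup M g \<le> z"
  using assms unfolding ess_sup_def by (auto intro: Inf_lower)

lemma open_superlevel_if_lsc:
  assumes "lsc g"
  shows "open {\<xi>. t < g \<xi>}"
  unfolding open_subopen[of "{\<xi>. t < g \<xi>}"]
proof
  fix \<xi> assume "\<xi> \<in> {\<xi>. t < g \<xi>}"
  then have "eventually (\<lambda>\<eta>. t < g \<eta>) (nhds \<xi>)"
    using assms unfolding lsc_def by (simp add: eventually_nhds_conv_at)
  then show "\<exists>T. open T \<and> \<xi> \<in> T \<and> T \<subseteq> {\<xi>. t < g \<xi>}"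
    unfolding eventually_nhds by auto
qed

lemma emeasure_open_eq_0_if_null_on_balls:
  fixes W :: "'b::metric_space set"
  assumes "open W" and "countable D" and M: "sets M = sets borel"
    and dense: "\<And>X. open X \<Longrightarrow> X \<noteq> {} \<Longrightarrow> \<exists>d\<in>D. d \<in> X"
    and null: "\<And>c n. c \<in> D \<Longrightarrow> cball c (2 / Suc n) \<subseteq> W \<Longrightarrow> emeasure M (ball c (1 / Suc n)) = 0"
  shows "emeasure M W = 0"
proof -
  define B where "B = (\<lambda>(c, n::nat). if cball c (2 / Suc n) \<subseteq> W then ball c (1 / Suc n) else {})"
  have "W \<subseteq> (\<Union>p\<in>D \<times> UNIV. B p)"
  proof
    fix \<xi> assume "\<xi> \<in> W"
    then obtain e where "e > 0" and e: "ball \<xi> e \<subseteq> W"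
      using \<open>open W\<close> open_contains_ball by blast
    then obtain n :: nat where n: "1 / Suc n < e / 3"
      using reals_Archimedean[of "e / 3"] by (auto simp: inverse_eq_divide)
    obtain d where "d \<in> D" and d: "dist \<xi> d < 1 / Suc n"
      using dense[of "ball \<xi> (1 / Suc n)"] by auto
    have "cball d (2 / Suc n) \<subseteq> W"
    proof
      fix y assume "y \<in> cball d (2 / Suc n)"
      then have "dist d y \<le> 2 * (1 / Suc n)" by simp
      then have "dist \<xi> y < e"
        using d n dist_triangle[of \<xi> y d] by linarith
      then show "y \<in> W" using e by auto
    qed
    then show "\<xi> \<in> (\<Union>p\<in>D \<times> UNIV. B p)"
      using \<open>d \<in> D\<close> d by (intro UN_I[of "(d, n)"]) (auto simp: B_def dist_commute)
  qed
  moreover have "(\<Union>p\<in>D \<times> UNIV. B p) \<in> null_sets M"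
    using \<open>countable D\<close> M null by (intro null_sets_UN') (auto simp: B_def null_sets_def)
  ultimately have "W \<in> null_sets M"
    using M \<open>open W\<close> by (auto intro: null_sets_subset)
  then show ?thesis by (rule null_setsD1)
qed

lemma ess_sup_le_if_null_on_balls:
  fixes g :: "'b::metric_space \<Rightarrow> real"
  assumes N: "sets N = sets borel" and "lsc g" and "countable D"
    and dense: "\<And>X. open X \<Longrightarrow> X \<noteq> {} \<Longrightarrow> \<exists>d\<in>D. d \<in> X"
    and null: "\<And>c n. c \<in> D \<Longrightarrow> cball c (2 / Suc n) \<subseteq> {\<xi>. t < g \<xi>} \<Longrightarrow>
        emeasure N (ball c (1 / Suc n)) = 0"
  shows "ess_sup N (\<lambda>\<xi>. ereal (g \<xi>)) \<le> ereal t"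
proof -
  have "open {\<xi>. t < g \<xi>}" using \<open>lsc g\<close> by (rule open_superlevel_if_lsc)
  moreover from this have "emeasure N {\<xi>. t < g \<xi>} = 0"
    using \<open>countable D\<close> N dense null by (rule emeasure_open_eq_0_if_null_on_balls)
  ultimately have "AE \<xi> in N. g \<xi> \<le> t"
    using N by (intro AE_I'[of "{\<xi>. t < g \<xi>}"]) (auto simp: null_sets_def)
  then show ?thesis
    by (intro ess_sup_le_if_AE_le) simp
qed

lemma set_integral_abs_le_bound_mult_measure:
  fixes h :: "'a \<Rightarrow> real"
  assumes "finite_measure M" and A: "A \<in> sets M" and meas: "h \<in> borel_measurable M"
    and bound: "\<And>x. x \<in> space M \<Longrightarrow> \<bar>h x\<bar> \<le> B"
  shows "(\<integral>x\<in>A. \<bar>h x\<bar> \<partial>M) \<le> B * measure M A"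
proof -
  interpret finite_measure M by fact
  have "integrable M h"
    using meas bound by (intro integrable_const_bound[where B = B]) auto
  then have "(\<integral>x\<in>A. \<bar>h x\<bar> \<partial>M) \<le> (\<integral>x\<in>A. B \<partial>M)"
    using integrable_mult_indicator[OF A integrable_abs]
      integrable_mult_indicator[OF A integrable_const[of "1::real"]] sets.sets_into_space[OF A] bound
    by (intro set_integral_mono) (auto simp: set_integrable_def)
  also have "\<dots> = B * measure M A"
    using A by (simp add: set_integral_const emeasure_eq_measure)
  finally show ?thesis .
qed

lemma bounded_equiintegrable_if_uniformly_bounded:
  assumes U: "U \<in> lmeasurable"
    and meas: "\<And>k. h k \<in> borel_measurable (lebesgue_on U)"
    and bound: "\<And>k x. x \<in> U \<Longrightarrow> \<bar>h k x\<bar> \<le> B"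
  shows "bounded_equiintegrable U h"
proof -
  let ?M = "lebesgue_on U"
  have fin: "finite_measure ?M"
    using U by (rule finite_measure_lebesgue_on)
  have space: "space ?M = U"
    using U by (simp add: fmeasurable_def)
  have int: "integrable ?M (h k)" for k
    using meas bound space by (intro finite_measure.integrable_const_bound[OF fin, where B = B]) auto
  have set_bound: "(\<integral>x\<in>A. \<bar>h k x\<bar> \<partial>?M) \<le> B * measure ?M A" if "A \<in> sets ?M" for A k
    using fin that meas bound space by (intro set_integral_abs_le_bound_mult_measure) auto
  show ?thesis
    unfolding bounded_equiintegrable_def
  proof (intro conjI allI impI)
    show "integrable ?M (h k)" for k by (rule int)
    show "\<exists>C. \<forall>k. (\<integral>x. \<bar>h k x\<bar> \<partial>?M) \<le> C"
      using set_bound[of "space ?M"] set_integral_space[OF integrable_abs[OF int]] by auto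
    fix \<epsilon> :: real assume "\<epsilon> > 0"
    show "\<exists>\<delta>>0. \<forall>A \<in> sets ?M. measure ?M A < \<delta> \<longrightarrow> (\<forall>k. (\<integral>x\<in>A. \<bar>h k x\<bar> \<partial>?M) < \<epsilon>)"
    proof (intro exI[of _ "\<epsilon> / (\<bar>B\<bar> + 1)"] conjI ballI impI allI)
      fix A k assume A: "A \<in> sets ?M" and small: "measure ?M A < \<epsilon> / (\<bar>B\<bar> + 1)"
      have "B * measure ?M A \<le> (\<bar>B\<bar> + 1) * measure ?M A"
        by (intro mult_right_mono) auto
      also have "\<dots> < \<epsilon>"
        using small by (simp add: field_simps add_pos_nonneg)
      finally show "(\<integral>x\<in>A. \<bar>h k x\<bar> \<partial>?M) < \<epsilon>"
        using set_bound[OF A, of k] by linarith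
    qed (use \<open>\<epsilon> > 0\<close> in auto)
  qed
qed

lemma weak_L1_conv_limit_vanishes_where_frequently_zero:
  assumes conv: "weak_L1_conv U g h"
    and meas: "\<And>k. g k \<in> borel_measurable (lebesgue_on U)"
    and "infinite K"
  shows "AE x in lebesgue_on U. (\<forall>k\<in>K. g k x = 0) \<longrightarrow> h x = 0"
proof -
  let ?M = "lebesgue_on U"
  define E where "E = {x \<in> space ?M. \<forall>k\<in>K. g k x = 0}"
  define \<psi> where "\<psi> x = sgn (h x) * indicator E x" for x
  have h: "integrable ?M h"
    using conv[unfolded weak_L1_conv_def] by (rule conjunct1)
  have E: "E \<in> sets ?M"
    unfolding E_def using meas by measurable
  have "\<psi> \<in> borel_measurable ?M"
    unfolding \<psi>_def using h E by measurable
  moreover have "\<exists>B. AE x in ?M. \<bar>\<psi> x\<bar> \<le> B"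
    by (intro exI[of _ 1] AE_I2) (simp add: \<psi>_def sgn_if split: split_indicator)
  ultimately have lim: "(\<lambda>k. \<integral>x. g k x * \<psi> x \<partial>?M) \<longlonglongrightarrow> (\<integral>x. h x * \<psi> x \<partial>?M)"
    by (rule conv[unfolded weak_L1_conv_def, THEN conjunct2, rule_format])
  have "(\<integral>x. g k x * \<psi> x \<partial>?M) = 0" if "k \<in> K" for k
  proof -
    have "(\<lambda>x. g k x * \<psi> x) = (\<lambda>x. 0)"
      using that by (intro ext) (simp add: \<psi>_def E_def split: split_indicator)
    then show ?thesis by simp
  qed
  then have "frequently (\<lambda>k. (\<integral>x. g k x * \<psi> x \<partial>?M) = 0) sequentially"
    using \<open>infinite K\<close> unfolding frequently_sequentially_iff_infinite[symmetric]
    by (rule frequently_elim1[rotated])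
  with lim have "(\<integral>x. h x * \<psi> x \<partial>?M) = 0"
    by (rule tendsto_eq_if_frequently_eq)
  moreover have "(\<lambda>x. h x * \<psi> x) = (\<lambda>x. \<bar>h x\<bar> * indicator E x)"
    by (intro ext) (simp add: \<psi>_def abs_if sgn_if)
  ultimately have "(\<integral>x. \<bar>h x\<bar> * indicator E x \<partial>?M) = 0"
    by simp
  moreover have "integrable ?M (\<lambda>x. \<bar>h x\<bar> * indicator E x)"
    using E h by (intro integrable_real_mult_indicator integrable_abs)
  ultimately have "AE x in ?M. \<bar>h x\<bar> * indicator E x = 0"
    by (subst (asm) integral_nonneg_eq_0_iff_AE) auto
  then show ?thesis
    by (rule lebesgue_on_mono) (auto simp: E_def split: split_indicator)
qed

lemma generates_young_measure_prob_space:
  assumes "generates_young_measure U u \<nu>" and "x \<in> U"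
  shows "prob_space (\<nu> x)" and "sets (\<nu> x) = sets borel"
  using assms(1)[unfolded generates_young_measure_def, THEN conjunct1] assms(2) by auto

lemma generates_young_measure_weak_L1_conv:
  fixes \<phi> :: "'b::euclidean_space \<Rightarrow> real"
  assumes young: "generates_young_measure U u \<nu>" and U: "U \<in> lmeasurable"
    and meas: "\<And>k. u k \<in> borel_measurable (lebesgue_on U)"
    and cont: "continuous_on UNIV \<phi>" and bound: "\<And>\<xi>. \<bar>\<phi> \<xi>\<bar> \<le> B"
  shows "weak_L1_conv U (\<lambda>k x. \<phi> (u k x)) (\<lambda>x. \<integral>\<xi>. \<phi> \<xi> \<partial>\<nu> x)"
proof -
  have "caratheodory U (\<lambda>x \<xi>. \<phi> \<xi>)"
    unfolding caratheodory_def using cont by simp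
  moreover have "bounded_equiintegrable U (\<lambda>k x. \<phi> (u k x))"
    using U measurable_compose[OF meas borel_measurable_continuous_onI[OF cont]] bound
    by (intro bounded_equiintegrable_if_uniformly_bounded) auto
  ultimately show ?thesis
    by (rule young[unfolded generates_young_measure_def, THEN conjunct2, THEN conjunct2,
          THEN conjunct2, rule_format, of "\<lambda>x \<xi>. \<phi> \<xi>", OF conjI])
qed

definition bump :: "'b::metric_space \<Rightarrow> real \<Rightarrow> 'b \<Rightarrow> real" where
  "bump c r \<xi> = max 0 (min 1 (2 - dist \<xi> c / r))"

lemma bump_nonneg: "0 \<le> bump c r \<xi>"
  by (simp add: bump_def)

lemma abs_bump_le_one: "\<bar>bump c r \<xi>\<bar> \<le> 1"
  by (simp add: bump_def)

lemma continuous_on_bump: "continuous_on UNIV (bump c r)"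
proof (cases "r = 0")
  case True
  then show ?thesis by (simp add: bump_def[abs_def])
next
  case False
  then show ?thesis unfolding bump_def[abs_def] by (intro continuous_intros) auto
qed

lemma bump_eq_1:
  assumes "dist \<xi> c < r"
  shows "bump c r \<xi> = 1"
proof -
  have "0 < r"
    using assms zero_le_dist[of \<xi> c] by linarith
  then have "dist \<xi> c / r < 1"
    using assms by simp
  then show ?thesis by (simp add: bump_def)
qed

lemma bump_eq_0: "r > 0 \<Longrightarrow> \<xi> \<notin> cball c (2 * r) \<Longrightarrow> bump c r \<xi> = 0"
  by (simp add: bump_def dist_commute field_simps)

lemma measure_ball_le_integral_bump:
  assumes "finite_measure N" and N: "sets N = sets borel"
  shows "measure N (ball c r) \<le> (\<integral>\<xi>. bump c r \<xi> \<partial>N)"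
proof -
  interpret finite_measure N by fact
  have "measure N (ball c r) = (\<integral>\<xi>. indicator (ball c r) \<xi> \<partial>N)"
    using N by (simp add: sets_eq_imp_space_eq)
  also have "\<dots> \<le> (\<integral>\<xi>. bump c r \<xi> \<partial>N)"
  proof (rule integral_mono)
    have "ball c r \<in> sets N" using N by simp
    then show "integrable N (indicator (ball c r) :: 'a \<Rightarrow> real)"
      by (intro integrable_const_bound[where B = 1]) auto
    have "bump c r \<in> borel_measurable N"
      using borel_measurable_continuous_onI[OF continuous_on_bump]
      by (simp add: measurable_cong_sets[OF N refl])
    then show "integrable N (bump c r)"
      using abs_bump_le_one by (intro integrable_const_bound[where B = 1]) auto
    show "indicator (ball c r) \<xi> \<le> bump c r \<xi>" for \<xi>
      using bump_nonneg[of c r \<xi>] bump_eq_1[of \<xi> c r]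
      by (auto simp: dist_commute split: split_indicator)
  qed
  finally show ?thesis .
qed

lemma young_measure_null_on_ball_if_frequently_avoided:
  fixes u :: "nat \<Rightarrow> 'a::euclidean_space \<Rightarrow> 'b::euclidean_space"
  assumes young: "generates_young_measure U u \<nu>" and U: "U \<in> lmeasurable"
    and meas: "\<And>k. u k \<in> borel_measurable (lebesgue_on U)"
    and "infinite K" and "r > 0"
  shows "AE x in lebesgue_on U.
    (\<forall>k\<in>K. u k x \<notin> cball c (2 * r)) \<longrightarrow> emeasure (\<nu> x) (ball c r) = 0"
proof -
  have "weak_L1_conv U (\<lambda>k x. bump c r (u k x)) (\<lambda>x. \<integral>\<xi>. bump c r \<xi> \<partial>\<nu> x)"
    using young U meas continuous_on_bump abs_bump_le_one
    by (rule generates_young_measure_weak_L1_conv)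
  moreover have "(\<lambda>x. bump c r (u k x)) \<in> borel_measurable (lebesgue_on U)" for k
    using measurable_compose[OF meas borel_measurable_continuous_onI[OF continuous_on_bump]]
    by (simp add: comp_def)
  ultimately have "AE x in lebesgue_on U.
      (\<forall>k\<in>K. bump c r (u k x) = 0) \<longrightarrow> (\<integral>\<xi>. bump c r \<xi> \<partial>\<nu> x) = 0"
    using \<open>infinite K\<close> by (rule weak_L1_conv_limit_vanishes_where_frequently_zero)
  then show ?thesis
  proof (rule lebesgue_on_mono, intro impI)
    fix x assume vanish: "(\<forall>k\<in>K. bump c r (u k x) = 0) \<longrightarrow> (\<integral>\<xi>. bump c r \<xi> \<partial>\<nu> x) = 0"
      and "x \<in> U" and "\<forall>k\<in>K. u k x \<notin> cball c (2 * r)"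
    then have "(\<integral>\<xi>. bump c r \<xi> \<partial>\<nu> x) = 0"
      using bump_eq_0 \<open>r > 0\<close> by blast
    moreover have "prob_space (\<nu> x)" and N: "sets (\<nu> x) = sets borel"
      using young \<open>x \<in> U\<close> by (rule generates_young_measure_prob_space)+
    ultimately have "measure (\<nu> x) (ball c r) = 0"
      using measure_ball_le_integral_bump[OF prob_space.axioms(1) N, of c r]
      by (simp add: measure_le_0_iff)
    then show "emeasure (\<nu> x) (ball c r) = 0"
      using \<open>prob_space (\<nu> x)\<close> by (simp add: prob_space_def finite_measure.emeasure_eq_measure)
  qed
qed

lemma AE_young_measure_ess_sup_le:
  fixes f :: "'a::euclidean_space \<Rightarrow> 'b::euclidean_space \<Rightarrow> real"
  assumes young: "generates_young_measure U u \<nu>" and U: "U \<in> lmeasurable"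
    and meas: "\<And>k. u k \<in> borel_measurable (lebesgue_on U)"
    and lsc: "AE x in lebesgue_on U. lsc (f x)"
    and "infinite K" and below: "\<And>k. k \<in> K \<Longrightarrow> AE x in lebesgue_on U. f x (u k x) < t"
  shows "AE x in lebesgue_on U. ess_sup (\<nu> x) (\<lambda>\<xi>. ereal (f x \<xi>)) \<le> ereal t"
proof -
  obtain D :: "'b set" where "countable D"
    and dense: "\<And>X. open X \<Longrightarrow> X \<noteq> {} \<Longrightarrow> \<exists>d\<in>D. d \<in> X"
    using countable_dense_exists by blast
  have "AE x in lebesgue_on U. \<forall>c\<in>D. \<forall>n::nat. (\<forall>k\<in>K. u k x \<notin> cball c (2 * (1 / Suc n))) \<longrightarrow>
      emeasure (\<nu> x) (ball c (1 / Suc n)) = 0"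
    unfolding AE_ball_countable[OF \<open>countable D\<close>] AE_all_countable
    by (intro ballI allI young_measure_null_on_ball_if_frequently_avoided[OF young U meas \<open>infinite K\<close>])
      simp
  moreover have "AE x in lebesgue_on U. \<forall>k\<in>K. f x (u k x) < t"
    using below by (intro AE_ball_countable' countableI_type)
  moreover have "AE x in lebesgue_on U. x \<in> U"
    using U by (auto simp: fmeasurable_def)
  ultimately show ?thesis
    using lsc
  proof eventually_elim
    case (elim x)
    show ?case
    proof (rule ess_sup_le_if_null_on_balls[OF _ \<open>lsc (f x)\<close> \<open>countable D\<close> dense])
      show "sets (\<nu> x) = sets borel"
        using young \<open>x \<in> U\<close> by (rule generates_young_measure_prob_space)
      fix c n assume "c \<in> D" and sub: "cball c (2 / Suc n) \<subseteq> {\<xi>. t < f x \<xi>}"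
      have "u k x \<notin> cball c (2 * (1 / Suc n))" if "k \<in> K" for k
      proof
        assume "u k x \<in> cball c (2 * (1 / Suc n))"
        then have "t < f x (u k x)" using sub by auto
        with elim(2) \<open>k \<in> K\<close> show False by auto
      qed
      then show "emeasure (\<nu> x) (ball c (1 / Suc n)) = 0"
        using elim(1) \<open>c \<in> D\<close> by blast
    qed
  qed
qed

theorem mainTheorem18:
  fixes U :: "'a::euclidean_space set"
    and f :: "'a \<Rightarrow> 'b::euclidean_space \<Rightarrow> real"
    and u :: "nat \<Rightarrow> 'a \<Rightarrow> 'b"
    and \<nu> :: "'a \<Rightarrow> 'b measure"
  assumes "open U"
    and "emeasure lebesgue U < \<infinity>"
    and "normal_integrand U f"
    and "\<exists>c. \<forall>x\<in>U. \<forall>\<xi>. c \<le> f x \<xi>"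
    and "\<forall>k. u k \<in> borel_measurable (lebesgue_on U)"
    and "\<exists>M. \<forall>k. AE x in lebesgue_on U. norm (u k x) \<le> M"
    and "generates_young_measure U u \<nu>"
  shows "liminf (\<lambda>k. ess_sup (lebesgue_on U) (\<lambda>x. ereal (f x (u k x))))
           \<ge> ess_sup (lebesgue_on U) (\<lambda>x. ess_sup (\<nu> x) (\<lambda>\<xi>. ereal (f x \<xi>)))"
proof (rule ccontr)
  let ?M = "lebesgue_on U"
  assume "\<not> ?thesis"
  then obtain t where t_liminf: "liminf (\<lambda>k. ess_sup ?M (\<lambda>x. ereal (f x (u k x)))) < ereal t"
    and t_fbar: "ereal t < ess_sup ?M (\<lambda>x. ess_sup (\<nu> x) (\<lambda>\<xi>. ereal (f x \<xi>)))"
    using ereal_dense2 by (meson not_le)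
  define K where "K = {k. AE x in ?M. f x (u k x) < t}"
  have in_K: "k \<in> K" if "ess_sup ?M (\<lambda>x. ereal (f x (u k x))) < ereal t" for k
    using AE_less_if_ess_sup_less[OF that] by (simp add: K_def)
  have "frequently (\<lambda>k. k \<in> K) sequentially"
    using frequently_less_if_Liminf_less[OF t_liminf] by (rule frequently_elim1) (rule in_K)
  then have "infinite K"
    by (simp add: frequently_sequentially_iff_infinite)
  moreover have "U \<in> lmeasurable"
    using assms(1,2) by (intro fmeasurableI) auto
  moreover have "AE x in ?M. lsc (f x)"
    using assms(3) unfolding normal_integrand_def by (rule conjunct2)
  ultimately have "AE x in ?M. ess_sup (\<nu> x) (\<lambda>\<xi>. ereal (f x \<xi>)) \<le> ereal t"
    using assms(5) by (intro AE_young_measure_ess_sup_le[OF assms(7)]) (auto simp: K_def)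
  then have "ess_sup ?M (\<lambda>x. ess_sup (\<nu> x) (\<lambda>\<xi>. ereal (f x \<xi>))) \<le> ereal t"
    by (rule ess_sup_le_if_AE_le)
  with t_fbar show False by simp
qed

end
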